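(* Fix $c\in(0,1]$. Let $\mathcal T$ be an infinite set of positive integers and for each $t\in\mathcal T$ let $H_t$ be a triangle-free graph on $t$ vertices that is $d$-regular with $d=\Theta(t^{2/3})$ and all of whose eigenvalues other than the largest have absolute value $O(t^{1/3})$. For a configuration $(F,\phi)$ on $K=K_{H_t,H_t}$ define \[\zeta_i=\frac{1}{td}\sum_{\substack{u^{\mathtt x}w^{\mathtt y}\in F\\ \text{internal}}}\phi(u^{\mathtt x})\phi(w^{\mathtt y}),\qquad \zeta_e=\frac{1}{t^2}\sum_{\substack{u^{\mathtt x}w^{\mathtt y}\in F\\ \text{external}}}\phi(u^{\mathtt x})\phi(w^{\mathtt y}).\] Then $\zeta_i+\zeta_e<1+o(1)$, where the $o(1)$ tends to $0$ as $t\to\infty$ in $\mathcal T$, uniformly over all configurations $(F,\phi)$ on $K_{H_t,H_t}$.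
   Context: For a graph $H$ on $t$ vertices, $K=K_{H,H}$ is the graph on $X\cup Y$ ($X,Y$ disjoint copies of $V(H)$) with $K[X]\cong K[Y]\cong H$ (natural copies) and all $X$–$Y$ edges present; edges within a side are internal, $X$–$Y$ edges are external. $K^+$ has vertices $v^{\mathtt b},v^{\mathtt s}$ ($v\in V(K)$), with $u^{\mathtt x}w^{\mathtt y}$ an edge iff $uw\in E(K)$, or $u=w$ and $\{\mathtt x,\mathtt y\}=\{\mathtt b,\mathtt s\}$ (vertex edges). An edge $u^{\mathtt x}w^{\mathtt y}$ with $u\ne w$ is internal/external as $uw$ is. A subgraph of $K^+$ is ETF if it contains no triangle containing an external edge. A configuration on $K$ is a pair $(F,\phi)$, $F\subseteq E(K^+)$, $\phi:V(K^+)\to[0,1]$, such that $F$ is ETF, contains all vertex edges, $N_F(v^{\mathtt b})\cap N_F(v^{\mathtt s})=\varnothing$ for all $v\in V(K)$, and $\phi(v^{\mathtt b})\in[1/2,1]$, $\phi(v^{\mathtt s})=1-\phi(v^{\mathtt b})$. *)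

theory Defs
  imports Complex_Main "Jordan_Normal_Form.Char_Poly"
begin

definition adj_matrix :: "nat \<Rightarrow> (nat \<Rightarrow> nat \<Rightarrow> bool) \<Rightarrow> real mat" where
  "adj_matrix t H = mat t t (\<lambda>(i,j). if H i j then 1 else 0)"

definition graph_spectrum :: "nat \<Rightarrow> (nat \<Rightarrow> nat \<Rightarrow> bool) \<Rightarrow> real multiset" where
  "graph_spectrum t H = proots (char_poly (adj_matrix t H))"

definition nontrivial_eigenvalues :: "nat \<Rightarrow> (nat \<Rightarrow> nat \<Rightarrow> bool) \<Rightarrow> real multiset" where
  "nontrivial_eigenvalues t H =
     graph_spectrum t H - {# Max (set_mset (graph_spectrum t H)) #}"

definition simple_graph_on :: "nat \<Rightarrow> (nat \<Rightarrow> nat \<Rightarrow> bool) \<Rightarrow> bool" where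
  "simple_graph_on t H \<longleftrightarrow>
     (\<forall>u<t. \<forall>w<t. H u w \<longleftrightarrow> H w u) \<and> (\<forall>u<t. \<not> H u u)"

definition triangle_free_on :: "nat \<Rightarrow> (nat \<Rightarrow> nat \<Rightarrow> bool) \<Rightarrow> bool" where
  "triangle_free_on t H \<longleftrightarrow>
     \<not> (\<exists>u<t. \<exists>v<t. \<exists>w<t. H u v \<and> H v w \<and> H u w)"

definition regular_on :: "nat \<Rightarrow> (nat \<Rightarrow> nat \<Rightarrow> bool) \<Rightarrow> nat \<Rightarrow> bool" where
  "regular_on t H d \<longleftrightarrow> (\<forall>u<t. card {w. w < t \<and> H u w} = d)"

(* Vertices of K^+ for K = K_{H,H}: (side, is_b, v) with side True = X, False = Y,
   is_b True = copy b, False = copy s, and v \<in> {0..<t} a vertex of H. *)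
type_synonym kpv = "bool \<times> bool \<times> nat"

definition kplus_verts :: "nat \<Rightarrow> kpv set" where
  "kplus_verts t = {(s, x, v). v < t}"

(* adjacency in K = K_{H,H}: vertices (side, v) *)
definition K_adj :: "(nat \<Rightarrow> nat \<Rightarrow> bool) \<Rightarrow> bool \<times> nat \<Rightarrow> bool \<times> nat \<Rightarrow> bool" where
  "K_adj H a b = (if fst a = fst b then H (snd a) (snd b) else True)"

definition kplus_adj :: "(nat \<Rightarrow> nat \<Rightarrow> bool) \<Rightarrow> kpv \<Rightarrow> kpv \<Rightarrow> bool" where
  "kplus_adj H a b =
     (case a of (s1, x1, u) \<Rightarrow> case b of (s2, x2, w) \<Rightarrow>
        K_adj H (s1, u) (s2, w) \<or> ((s1, u) = (s2, w) \<and> x1 \<noteq> x2))"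

definition kplus_edges :: "nat \<Rightarrow> (nat \<Rightarrow> nat \<Rightarrow> bool) \<Rightarrow> kpv set set" where
  "kplus_edges t H = {{a, b} | a b. a \<in> kplus_verts t \<and> b \<in> kplus_verts t \<and> kplus_adj H a b}"

definition internal_edge :: "kpv set \<Rightarrow> bool" where
  "internal_edge e \<longleftrightarrow>
     (\<exists>a b. e = {a, b} \<and> fst a = fst b \<and> snd (snd a) \<noteq> snd (snd b))"

definition external_edge :: "kpv set \<Rightarrow> bool" where
  "external_edge e \<longleftrightarrow> (\<exists>a b. e = {a, b} \<and> fst a \<noteq> fst b)"

definition ETF :: "kpv set set \<Rightarrow> bool" where
  "ETF F \<longleftrightarrow>
     \<not> (\<exists>a b c. {a, b} \<in> F \<and> {b, c} \<in> F \<and> {a, c} \<in> F \<and>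
          (external_edge {a, b} \<or> external_edge {b, c} \<or> external_edge {a, c}))"

definition configuration ::
  "nat \<Rightarrow> (nat \<Rightarrow> nat \<Rightarrow> bool) \<Rightarrow> kpv set set \<Rightarrow> (kpv \<Rightarrow> real) \<Rightarrow> bool" where
  "configuration t H F \<phi> \<longleftrightarrow>
     F \<subseteq> kplus_edges t H \<and> ETF F \<and>
     (\<forall>s v. v < t \<longrightarrow> {(s, True, v), (s, False, v)} \<in> F) \<and>
     (\<forall>s v. v < t \<longrightarrow>
        \<not> (\<exists>z. {(s, True, v), z} \<in> F \<and> {(s, False, v), z} \<in> F)) \<and>
     (\<forall>s v. v < t \<longrightarrow> 1/2 \<le> \<phi> (s, True, v) \<and> \<phi> (s, True, v) \<le> 1 \<and>
                       \<phi> (s, False, v) = 1 - \<phi> (s, True, v))"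

definition zeta_i :: "nat \<Rightarrow> nat \<Rightarrow> kpv set set \<Rightarrow> (kpv \<Rightarrow> real) \<Rightarrow> real" where
  "zeta_i t d F \<phi> = (1 / (real t * real d)) * (\<Sum>e\<in>{e\<in>F. internal_edge e}. \<Prod>v\<in>e. \<phi> v)"

definition zeta_e :: "nat \<Rightarrow> kpv set set \<Rightarrow> (kpv \<Rightarrow> real) \<Rightarrow> real" where
  "zeta_e t F \<phi> = (1 / (real t)^2) * (\<Sum>e\<in>{e\<in>F. external_edge e}. \<Prod>v\<in>e. \<phi> v)"

end

(*
  For an external edge ab of F write R(a) for the phi-weight of the external F-neighbours of a,
  and C(a,b) for that of the common external F-neighbours of a and b.  Since F has no triangle
  through an external edge, C(a,b) = 0 whenever ab is an internal edge of F, while always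
  C(a,b) <= sqrt (R(a) R(b)).  Hence every internal pair ab of H contributes at most
  phi(a) phi(b) (1 - C(a,b) / sqrt (R(a) R(b))) to the internal weight.  The subtracted part is
  a sum over z of quadratic forms of the adjacency matrix of H at the vectors
  g_z(a) = [az external in F] phi(a) / sqrt R(a); by the expander mixing lemma it is at least
  d/t times sum_z phi(z) (sum_a g_z(a))^2, up to an error controlled by the spectral gap, and by
  Cauchy-Schwarz and AM-GM this is at least the external weight.  After normalisation the
  internal and external weights thus sum to at most 1 + 4 sigma/d, where sigma^4 bounds the
  fourth moment of the non-trivial spectrum, so sigma <= (t (C t^(1/3))^4)^(1/4) = C t^(7/12),
  which is o(d) since d >= c t^(2/3).
*)
theory Submission
  imports
    Defs
    "Jordan_Normal_Form.Schur_Decomposition"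
    "HOL-Analysis.Convex"
    "HOL-Real_Asymp.Real_Asymp"
begin

section \<open>Real symmetric matrices\<close>

lemma real_symmetric_eigenvalue_real:
  fixes A :: "real mat"
  assumes A: "A \<in> carrier_mat n n"
    and sym: "\<And>i j. i < n \<Longrightarrow> j < n \<Longrightarrow> A $$ (i,j) = A $$ (j,i)"
    and ev: "eigenvalue (map_mat complex_of_real A) a"
  shows "Im a = 0"
proof -
  let ?Ac = "map_mat complex_of_real A"
  have Ac: "?Ac \<in> carrier_mat n n" using A by simp
  from ev obtain v where v: "v \<in> carrier_vec n" "v \<noteq> 0\<^sub>v n" "?Ac *\<^sub>v v = a \<cdot>\<^sub>v v"
    unfolding eigenvalue_def eigenvector_def using Ac by auto
  have row: "(\<Sum>j=0..<n. complex_of_real (A $$ (i,j)) * v $ j) = a * v $ i" if "i < n" for i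
  proof -
    have "(?Ac *\<^sub>v v) $ i = (a \<cdot>\<^sub>v v) $ i" using v(3) by simp
    then show ?thesis using that A v(1) by (simp add: scalar_prod_def)
  qed
  define s where "s = (\<Sum>i=0..<n. cnj (v $ i) * (\<Sum>j=0..<n. complex_of_real (A $$ (i,j)) * v $ j))"
  define r where "r = (\<Sum>i=0..<n. (cmod (v $ i))^2)"
  have s_eq: "s = a * complex_of_real r"
  proof -
    have "s = (\<Sum>i=0..<n. a * (cnj (v $ i) * v $ i))" unfolding s_def
      by (intro sum.cong refl) (simp add: row)
    also have "\<dots> = a * (\<Sum>i=0..<n. complex_of_real ((cmod (v $ i))^2))"
      unfolding sum_distrib_left by (intro sum.cong refl) (metis complex_norm_square mult.commute)
    finally show ?thesis by (simp add: r_def)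
  qed
  have s_real: "cnj s = s"
  proof -
    have "cnj s = (\<Sum>i=0..<n. \<Sum>j=0..<n. v $ i * complex_of_real (A $$ (i,j)) * cnj (v $ j))"
      unfolding s_def by (simp add: sum_distrib_left mult.commute mult.left_commute)
    also have "\<dots> = (\<Sum>j=0..<n. \<Sum>i=0..<n. v $ i * complex_of_real (A $$ (i,j)) * cnj (v $ j))"
      by (rule sum.swap)
    also have "\<dots> = s" unfolding s_def sum_distrib_left
      by (intro sum.cong refl) (simp add: sym mult.commute mult.left_commute)
    finally show ?thesis .
  qed
  have "r > 0"
  proof -
    from v(1,2) obtain i where i: "i < n" "v $ i \<noteq> 0"
      by (metis carrier_vecD eq_vecI index_zero_vec(1,2))
    have "(cmod (v $ i))^2 \<le> r" unfolding r_def
      by (rule member_le_sum) (use i in auto)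
    then show ?thesis using i by (smt (verit) zero_less_power2 norm_eq_zero)
  qed
  have "Im a * r = 0" using arg_cong[OF s_real, of Im] s_eq by simp
  then show ?thesis using \<open>r > 0\<close> by simp
qed

lemma real_symmetric_char_poly_splits:
  fixes A :: "real mat"
  assumes A: "A \<in> carrier_mat n n"
    and sym: "\<And>i j. i < n \<Longrightarrow> j < n \<Longrightarrow> A $$ (i,j) = A $$ (j,i)"
  obtains es where "char_poly A = (\<Prod>e\<leftarrow>es. [:- e, 1:])" "length es = n"
proof -
  let ?Ac = "map_mat complex_of_real A"
  have Ac: "?Ac \<in> carrier_mat n n" using A by simp
  from char_poly_factorized[OF Ac] obtain as where
    as: "char_poly ?Ac = (\<Prod>a\<leftarrow>as. [:- a, 1:])" "length as = n" by blast
  have cp_map: "char_poly ?Ac = map_poly complex_of_real (char_poly A)"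
    by (rule of_real_hom.char_poly_hom[OF A])
  have real: "Im a = 0" if "a \<in> set as" for a
  proof -
    have "poly (char_poly ?Ac) a = 0" unfolding as(1) using that
      by (induct as) (auto simp: poly_prod_list)
    then have "eigenvalue ?Ac a" using eigenvalue_root_char_poly[OF Ac] by simp
    then show ?thesis using real_symmetric_eigenvalue_real[OF A sym] by blast
  qed
  define es where "es = map Re as"
  have as_es: "as = map complex_of_real es" unfolding es_def using real
    by (induct as) (auto simp: complex_eq_iff)
  interpret m: map_poly_inj_idom_hom complex_of_real ..
  have "map_poly complex_of_real (char_poly A) = map_poly complex_of_real (\<Prod>e\<leftarrow>es. [:- e, 1:])"
    unfolding cp_map[symmetric] as(1) as_es m.hom_prod_list by (simp add: o_def)
  then have "char_poly A = (\<Prod>e\<leftarrow>es. [:- e, 1:])"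
    by (rule m.injectivity)
  moreover have "length es = n" using as(2) es_def by simp
  ultimately show ?thesis by (rule that)
qed

definition mat_trace :: "'a :: comm_ring_1 mat \<Rightarrow> 'a" where
  "mat_trace M = (\<Sum>i<dim_row M. M $$ (i,i))"

lemma mat_trace_mult_comm:
  fixes X Y :: "'a :: comm_ring_1 mat"
  assumes X: "X \<in> carrier_mat n m" and Y: "Y \<in> carrier_mat m n"
  shows "mat_trace (X * Y) = mat_trace (Y * X)"
proof -
  have "mat_trace (X * Y) = (\<Sum>i<n. \<Sum>k<m. X $$ (i,k) * Y $$ (k,i))"
    unfolding mat_trace_def using X Y
    by (intro sum.cong) (auto simp: scalar_prod_def lessThan_atLeast0)
  also have "\<dots> = (\<Sum>k<m. \<Sum>i<n. X $$ (i,k) * Y $$ (k,i))" by (rule sum.swap)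
  also have "\<dots> = mat_trace (Y * X)"
    unfolding mat_trace_def using X Y
    by (intro sum.cong) (auto simp: scalar_prod_def lessThan_atLeast0 mult.commute)
  finally show ?thesis .
qed

lemma upper_triangular_mult:
  fixes A B :: "'a :: comm_ring_1 mat"
  assumes A: "A \<in> carrier_mat n n" and B: "B \<in> carrier_mat n n"
    and uA: "upper_triangular A" and uB: "upper_triangular B"
  shows "upper_triangular (A * B)"
    and "\<And>i. i < n \<Longrightarrow> (A * B) $$ (i,i) = A $$ (i,i) * B $$ (i,i)"
proof -
  have entry: "(A * B) $$ (i,j) = (\<Sum>k\<in>{0..<n}. A $$ (i,k) * B $$ (k,j))" if "i < n" "j < n" for i j
    using A B that by (simp add: scalar_prod_def)
  have vanish: "A $$ (i,k) * B $$ (k,j) = 0" if "i < n" "k < n" "k < i \<or> j < k" for i j k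
    using uA uB A B that by (auto simp: upper_triangular_def)
  show "upper_triangular (A * B)"
  proof (rule upper_triangularI)
    fix i j assume ij: "j < i" "i < dim_row (A * B)"
    then have "i < n" "j < n" using A by auto
    then show "(A * B) $$ (i,j) = 0"
      using ij by (simp add: entry) (intro sum.neutral ballI vanish, auto)
  qed
  fix i assume i: "i < n"
  have "(\<Sum>k\<in>{0..<n}. A $$ (i,k) * B $$ (k,i)) = A $$ (i,i) * B $$ (i,i)"
    using i by (subst sum.mono_neutral_right[of "{0..<n}" "{i}"]) (auto intro!: vanish)
  then show "(A * B) $$ (i,i) = A $$ (i,i) * B $$ (i,i)" using entry[OF i i] by simp
qed

lemma upper_triangular_power:
  fixes B :: "'a :: comm_ring_1 mat"
  assumes B: "B \<in> carrier_mat n n" and uB: "upper_triangular B"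
  shows "upper_triangular (B ^\<^sub>m k) \<and> (\<forall>i<n. (B ^\<^sub>m k) $$ (i,i) = (B $$ (i,i)) ^ k)"
proof (induct k)
  case 0
  then show ?case using B by simp
next
  case (Suc k)
  have "B ^\<^sub>m k \<in> carrier_mat n n" using B by simp
  then show ?case using upper_triangular_mult[OF _ B _ uB] Suc by simp
qed

lemma mat_trace_power_eq_sum_roots:
  fixes A :: "real mat"
  assumes A: "A \<in> carrier_mat n n" and cp: "char_poly A = (\<Prod>e\<leftarrow>es. [:- e, 1:])"
  shows "mat_trace (A ^\<^sub>m k) = (\<Sum>e\<leftarrow>es. e ^ k)"
proof -
  obtain B P Q where "schur_decomposition A es = (B,P,Q)"
    by (cases "schur_decomposition A es") auto
  from schur_decomposition[OF A cp this] have wit: "similar_mat_wit A B P Q"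
    and uB: "upper_triangular B" and diagB: "diag_mat B = es" by auto
  note W = similar_mat_witD2[OF A wit]
  have Bk: "B ^\<^sub>m k \<in> carrier_mat n n" using W(5) by simp
  have "mat_trace (A ^\<^sub>m k) = mat_trace ((P * B ^\<^sub>m k) * Q)"
    using similar_mat_wit_pow_id[OF wit] by simp
  also have "\<dots> = mat_trace (Q * (P * B ^\<^sub>m k))"
    using W Bk by (intro mat_trace_mult_comm) auto
  also have "Q * (P * B ^\<^sub>m k) = B ^\<^sub>m k"
    using assoc_mult_mat[of Q n n P n "B ^\<^sub>m k" n] W(2,6,7) Bk by (simp add: left_mult_one_mat)
  also have "mat_trace (B ^\<^sub>m k) = (\<Sum>i<n. (B $$ (i,i)) ^ k)"
    unfolding mat_trace_def using upper_triangular_power[OF W(5) uB, of k] W(5) by simp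
  also have "\<dots> = (\<Sum>e\<leftarrow>es. e ^ k)"
    using W(5) unfolding diagB[symmetric] diag_mat_def
    by (simp add: interv_sum_list_conv_sum_set_nat lessThan_atLeast0)
  finally show ?thesis .
qed

lemma proots_prod_linear_factors: "proots (\<Prod>e\<leftarrow>es. [:- e, 1:]) = mset (es :: real list)"
proof (induct es)
  case (Cons e es)
  have "(\<Prod>e\<leftarrow>es. [:- e, 1:]) \<noteq> (0 :: real poly)"
    by (auto simp: prod_list_zero_iff)
  then have "proots (\<Prod>e\<leftarrow>e # es. [:- e, 1:]) = proots [:- e, 1:] + proots (\<Prod>e\<leftarrow>es. [:- e, 1:])"
    by (simp only: prod_list.Cons list.map) (rule proots_mult, auto)
  then show ?case using Cons by simp
qed simp

section \<open>Spectra of regular graphs\<close>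

lemma adj_matrix_carrier [simp]: "adj_matrix t H \<in> carrier_mat t t"
  by (simp add: adj_matrix_def)

lemma dim_adj_matrix [simp]: "dim_row (adj_matrix t H) = t" "dim_col (adj_matrix t H) = t"
  by (simp_all add: adj_matrix_def)

lemma index_adj_matrix [simp]:
  "i < t \<Longrightarrow> j < t \<Longrightarrow> adj_matrix t H $$ (i,j) = (if H i j then 1 else 0)"
  by (simp add: adj_matrix_def)

lemma simple_graph_on_sym: "simple_graph_on t H \<Longrightarrow> u < t \<Longrightarrow> w < t \<Longrightarrow> H u w \<longleftrightarrow> H w u"
  by (simp add: simple_graph_on_def)

lemma sum_indicator_card:
  "finite A \<Longrightarrow> (\<Sum>x\<in>A. if P x then (1::real) else 0) = real (card {x\<in>A. P x})"
  by (simp add: sum.If_cases Int_def)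

lemma regular_on_degree:
  assumes "regular_on t H d" "u < t"
  shows "(\<Sum>w<t. if H u w then (1::real) else 0) = real d"
proof -
  have "{w\<in>{..<t}. H u w} = {w. w < t \<and> H u w}" by auto
  then show ?thesis using assms by (simp add: sum_indicator_card regular_on_def)
qed

lemma graph_spectrum_split:
  assumes "simple_graph_on t H"
  obtains es where "char_poly (adj_matrix t H) = (\<Prod>e\<leftarrow>es. [:- e, 1:])" "length es = t"
    and "graph_spectrum t H = mset es"
proof -
  have sym: "adj_matrix t H $$ (i,j) = adj_matrix t H $$ (j,i)" if "i < t" "j < t" for i j
    using simple_graph_on_sym[OF assms that] that by simp
  obtain es where "char_poly (adj_matrix t H) = (\<Prod>e\<leftarrow>es. [:- e, 1:])" "length es = t"
    by (rule real_symmetric_char_poly_splits[OF adj_matrix_carrier sym])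
  then show ?thesis
    using that by (simp add: graph_spectrum_def proots_prod_linear_factors)
qed

lemma size_graph_spectrum:
  assumes "simple_graph_on t H" shows "size (graph_spectrum t H) = t"
  by (rule graph_spectrum_split[OF assms]) (metis size_mset)

lemma graph_spectrum_abs_le_degree:
  assumes reg: "regular_on t H d" and \<mu>: "\<mu> \<in># graph_spectrum t H"
  shows "\<bar>\<mu>\<bar> \<le> real d"
proof -
  let ?A = "adj_matrix t H"
  have "char_poly ?A \<noteq> 0"
    using degree_monic_char_poly[OF adj_matrix_carrier, of t H] by (metis coeff_0 zero_neq_one)
  then have "poly (char_poly ?A) \<mu> = 0" using \<mu> by (simp add: graph_spectrum_def)
  then have "eigenvalue ?A \<mu>" using eigenvalue_root_char_poly[OF adj_matrix_carrier] by simp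
  then obtain v where v: "v \<in> carrier_vec t" "v \<noteq> 0\<^sub>v t" "?A *\<^sub>v v = \<mu> \<cdot>\<^sub>v v"
    unfolding eigenvalue_def eigenvector_def by auto
  from v(1,2) obtain i0 where i0: "i0 < t" "v $ i0 \<noteq> 0"
    by (metis carrier_vecD eq_vecI index_zero_vec(1,2))
  \<comment> \<open>evaluate the eigenvector equation at a coordinate of maximal modulus\<close>
  define m where "m = Max ((\<lambda>j. \<bar>v $ j\<bar>) ` {..<t})"
  have le_m: "\<bar>v $ j\<bar> \<le> m" if "j < t" for j unfolding m_def using that by (intro Max_ge) auto
  have "m \<in> (\<lambda>j. \<bar>v $ j\<bar>) ` {..<t}" unfolding m_def using i0 by (intro Max_in) auto
  then obtain i where i: "i < t" "\<bar>v $ i\<bar> = m" by force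
  have "m > 0" using le_m[OF i0(1)] i0(2) by linarith
  have "(\<Sum>j\<in>{0..<t}. ?A $$ (i,j) * v $ j) = \<mu> * v $ i"
    using arg_cong[OF v(3), of "\<lambda>w. w $ i"] i v(1) by (simp add: scalar_prod_def)
  then have "\<bar>\<mu>\<bar> * m = \<bar>\<Sum>j\<in>{0..<t}. ?A $$ (i,j) * v $ j\<bar>" using i by (simp add: abs_mult)
  also have "\<dots> \<le> (\<Sum>j\<in>{0..<t}. \<bar>?A $$ (i,j) * v $ j\<bar>)" by (rule sum_abs)
  also have "\<dots> \<le> (\<Sum>j<t. (if H i j then 1 else 0) * m)"
    unfolding atLeast0LessThan using i le_m by (intro sum_mono) (auto simp: abs_mult)
  also have "\<dots> = real d * m"
    using regular_on_degree[OF reg i(1)] by (simp add: sum_distrib_right[symmetric])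
  finally show ?thesis using \<open>m > 0\<close> by simp
qed

definition codegree :: "nat \<Rightarrow> (nat \<Rightarrow> nat \<Rightarrow> bool) \<Rightarrow> nat \<Rightarrow> nat \<Rightarrow> nat" where
  "codegree t H u w = card {i. i < t \<and> H u i \<and> H i w}"

lemma codegree_sum:
  "real (codegree t H j k) = (\<Sum>i<t. if H j i \<and> H i k then 1 else 0)"
proof -
  have "{i\<in>{..<t}. H j i \<and> H i k} = {i. i < t \<and> H j i \<and> H i k}" by auto
  then show ?thesis by (simp add: sum_indicator_card codegree_def)
qed

lemma codegree_sym: "simple_graph_on t H \<Longrightarrow> j < t \<Longrightarrow> k < t \<Longrightarrow> codegree t H j k = codegree t H k j"
  unfolding codegree_def by (rule arg_cong[where f = card]) (auto dest: simple_graph_on_sym)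

lemma sum_graph_spectrum_fourth_powers:
  assumes sg: "simple_graph_on t H"
  shows "(\<Sum>\<mu>\<in>#graph_spectrum t H. \<mu> ^ 4) = (\<Sum>j<t. \<Sum>k<t. real (codegree t H j k) ^ 2)"
proof -
  let ?A = "adj_matrix t H"
  obtain es where cp: "char_poly ?A = (\<Prod>e\<leftarrow>es. [:- e, 1:])" and spec: "graph_spectrum t H = mset es"
    using graph_spectrum_split[OF sg] by blast
  define A2 where "A2 = ?A * ?A"
  have A2: "A2 \<in> carrier_mat t t"
    unfolding A2_def using mult_carrier_mat[OF adj_matrix_carrier adj_matrix_carrier] .
  have A2_entry: "A2 $$ (j,k) = real (codegree t H j k)" if "j < t" "k < t" for j k
    unfolding A2_def codegree_sum using that
    by (simp add: scalar_prod_def atLeast0LessThan) (intro sum.cong refl, auto)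
  have "?A ^\<^sub>m 4 = ((?A * ?A) * ?A) * ?A"
    by (simp add: numeral_eq_Suc)
  also have "\<dots> = A2 * A2"
    using A2 unfolding A2_def by (rule assoc_mult_mat[of _ t t _ t _ t]) simp_all
  finally have "?A ^\<^sub>m 4 = A2 * A2" .
  then have "mat_trace (?A ^\<^sub>m 4) = (\<Sum>j<t. \<Sum>k<t. A2 $$ (j,k) * A2 $$ (k,j))"
    unfolding mat_trace_def using A2 by (intro sum.cong) (auto simp: scalar_prod_def lessThan_atLeast0)
  also have "\<dots> = (\<Sum>j<t. \<Sum>k<t. real (codegree t H j k) ^ 2)"
    by (intro sum.cong refl) (simp add: A2_entry codegree_sym[OF sg] power2_eq_square)
  finally show ?thesis
    using mat_trace_power_eq_sum_roots[OF adj_matrix_carrier cp, of 4]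
    by (simp add: spec sum_mset_sum_list flip: mset_map)
qed

section \<open>A fourth-moment mixing lemma\<close>

text \<open>Spectrally this is \<open>\<lambda>\<^sub>m\<^sub>a\<^sub>x\<^sup>4 \<le> \<Sum>\<lambda>\<^sup>4\<close>, the right-hand side being the squared
  Frobenius norm of \<open>M\<^sup>2\<close>; applying Cauchy-Schwarz twice avoids the spectral theorem.\<close>

lemma symmetric_quadratic_form_bound:
  fixes M :: "nat \<Rightarrow> nat \<Rightarrow> real" and G :: "nat \<Rightarrow> real"
  assumes sym: "\<And>j k. j < n \<Longrightarrow> k < n \<Longrightarrow> M j k = M k j"
  shows "\<bar>\<Sum>u<n. \<Sum>w<n. M u w * G u * G w\<bar>
           \<le> sqrt (sqrt (\<Sum>j<n. \<Sum>k<n. (\<Sum>i<n. M j i * M i k) ^ 2)) * (\<Sum>u<n. G u ^ 2)"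
proof -
  define T where "T = (\<Sum>j<n. \<Sum>k<n. (\<Sum>i<n. M j i * M i k) ^ 2)"
  define X where "X = (\<Sum>u<n. G u ^ 2)"
  define v where "v i = (\<Sum>j<n. M i j * G j)" for i
  define w where "w j = (\<Sum>i<n. M j i * v i)" for j
  define Y where "Y = (\<Sum>i<n. v i ^ 2)"
  have X0: "X \<ge> 0" and Y0: "Y \<ge> 0" and T0: "T \<ge> 0"
    unfolding X_def Y_def T_def by (auto intro!: sum_nonneg)
  have Q_v: "(\<Sum>u<n. \<Sum>w<n. M u w * G u * G w) = (\<Sum>i<n. G i * v i)"
    by (simp add: v_def sum_distrib_left algebra_simps)
  have Y_w: "Y = (\<Sum>j<n. G j * w j)"
  proof -
    have "Y = (\<Sum>i<n. \<Sum>j<n. v i * M i j * G j)"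
      by (simp add: Y_def power2_eq_square v_def[of i for i] sum_distrib_left algebra_simps)
    also have "\<dots> = (\<Sum>j<n. \<Sum>i<n. v i * M i j * G j)" by (rule sum.swap)
    also have "\<dots> = (\<Sum>j<n. G j * w j)"
      unfolding w_def sum_distrib_left by (intro sum.cong refl) (auto simp: sym algebra_simps)
    finally show ?thesis .
  qed
  have w_sq: "(\<Sum>j<n. w j ^ 2) \<le> T * X"
  proof -
    have w_eq: "w j = (\<Sum>k<n. (\<Sum>i<n. M j i * M i k) * G k)" for j
    proof -
      have "w j = (\<Sum>i<n. \<Sum>k<n. M j i * M i k * G k)"
        by (simp add: w_def v_def sum_distrib_left algebra_simps)
      also have "\<dots> = (\<Sum>k<n. (\<Sum>i<n. M j i * M i k) * G k)"
        by (subst sum.swap) (simp add: sum_distrib_right)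
      finally show ?thesis .
    qed
    have "(\<Sum>j<n. w j ^ 2) \<le> (\<Sum>j<n. (\<Sum>k<n. (\<Sum>i<n. M j i * M i k) ^ 2) * X)"
      unfolding X_def w_eq by (intro sum_mono Cauchy_Schwarz_ineq_sum)
    then show ?thesis by (simp add: T_def sum_distrib_right)
  qed
  have "Y ^ 2 \<le> X * (T * X)"
    using Cauchy_Schwarz_ineq_sum[of G w "{..<n}"] w_sq X0
    unfolding Y_w[symmetric] X_def[symmetric] by (meson mult_left_mono order_trans)
  then have "sqrt (Y ^ 2) \<le> sqrt (T * X ^ 2)"
    by (intro real_sqrt_le_mono) (simp add: power2_eq_square mult.commute mult.left_commute)
  then have Y_le: "Y \<le> sqrt T * X"
    using Y0 X0 by (simp add: real_sqrt_mult)
  have "(\<Sum>i<n. G i * v i) ^ 2 \<le> X * Y"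
    unfolding X_def Y_def by (rule Cauchy_Schwarz_ineq_sum)
  also have "\<dots> \<le> X * (sqrt T * X)" using Y_le X0 by (rule mult_left_mono)
  finally have "sqrt ((\<Sum>i<n. G i * v i) ^ 2) \<le> sqrt (sqrt T * X ^ 2)"
    by (intro real_sqrt_le_mono) (simp add: power2_eq_square mult.commute mult.left_commute)
  then show ?thesis
    unfolding Q_v T_def[symmetric] X_def[symmetric] using X0 by (simp add: real_sqrt_mult)
qed

definition codegree_deviation :: "nat \<Rightarrow> (nat \<Rightarrow> nat \<Rightarrow> bool) \<Rightarrow> nat \<Rightarrow> real" where
  "codegree_deviation t H d = (\<Sum>j<t. \<Sum>k<t. (real (codegree t H j k) - real d ^ 2 / real t) ^ 2)"

lemma codegree_deviation_nonneg: "0 \<le> codegree_deviation t H d"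
  unfolding codegree_deviation_def by (intro sum_nonneg) simp

lemma regular_on_in_degree:
  assumes sg: "simple_graph_on t H" and reg: "regular_on t H d" and k: "k < t"
  shows "(\<Sum>i<t. if H i k then (1::real) else 0) = real d"
proof -
  have "(\<Sum>i<t. if H i k then (1::real) else 0) = (\<Sum>i<t. if H k i then 1 else 0)"
    using simple_graph_on_sym[OF sg _ k] by (intro sum.cong) auto
  then show ?thesis using regular_on_degree[OF reg k] by simp
qed

text \<open>Apply the previous lemma to the adjacency matrix minus its rank-one part \<open>d/t J\<close>.\<close>

lemma regular_graph_mixing:
  fixes G :: "nat \<Rightarrow> real"
  assumes sg: "simple_graph_on t H" and reg: "regular_on t H d"
  shows "real d / real t * (\<Sum>u<t. G u) ^ 2 - sqrt (sqrt (codegree_deviation t H d)) * (\<Sum>u<t. G u ^ 2)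
           \<le> (\<Sum>u<t. \<Sum>w<t. if H u w then G u * G w else 0)"
proof -
  define c where "c = real d / real t"
  define M where "M j k = (if H j k then 1 else 0) - c" for j k
  have sym: "M j k = M k j" if "j < t" "k < t" for j k
    using simple_graph_on_sym[OF sg that] by (simp add: M_def)
  have M_square: "(\<Sum>i<t. M j i * M i k) = real (codegree t H j k) - real d ^ 2 / real t"
    if "j < t" "k < t" for j k
  proof -
    have "(\<Sum>i<t. M j i * M i k) = (\<Sum>i<t. (if H j i \<and> H i k then 1 else 0)
          - c * (if H i k then 1 else 0) - c * (if H j i then 1 else 0) + c ^ 2)"
      by (rule sum.cong) (auto simp: M_def power2_eq_square algebra_simps)
    also have "\<dots> = real (codegree t H j k) - c * real d - c * real d + real t * c ^ 2"
      using regular_on_degree[OF reg that(1)] regular_on_in_degree[OF sg reg that(2)]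
      by (simp add: sum.distrib sum_subtractf sum_distrib_left[symmetric] codegree_sum)
    finally show ?thesis by (cases "t = 0") (auto simp: c_def power2_eq_square)
  qed
  have "(\<Sum>u<t. \<Sum>w<t. M u w * G u * G w)
      = (\<Sum>u<t. \<Sum>w<t. (if H u w then G u * G w else 0) - c * (G u * G w))"
    unfolding M_def by (intro sum.cong refl) (auto simp: algebra_simps)
  also have "\<dots> = (\<Sum>u<t. \<Sum>w<t. if H u w then G u * G w else 0) - c * (\<Sum>u<t. \<Sum>w<t. G u * G w)"
    by (simp add: sum_subtractf sum_distrib_left)
  also have "(\<Sum>u<t. \<Sum>w<t. G u * G w) = (\<Sum>u<t. G u) ^ 2"
    by (simp add: power2_eq_square sum_product)
  finally have quadratic: "(\<Sum>u<t. \<Sum>w<t. M u w * G u * G w)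
      = (\<Sum>u<t. \<Sum>w<t. if H u w then G u * G w else 0) - c * (\<Sum>u<t. G u) ^ 2" .
  have deviation: "(\<Sum>j<t. \<Sum>k<t. (\<Sum>i<t. M j i * M i k) ^ 2) = codegree_deviation t H d"
    unfolding codegree_deviation_def by (intro sum.cong refl) (simp add: M_square)
  have "\<bar>\<Sum>u<t. \<Sum>w<t. M u w * G u * G w\<bar>
      \<le> sqrt (sqrt (\<Sum>j<t. \<Sum>k<t. (\<Sum>i<t. M j i * M i k) ^ 2)) * (\<Sum>u<t. G u ^ 2)"
    by (intro symmetric_quadratic_form_bound sym)
  then show ?thesis unfolding quadratic deviation c_def by linarith
qed

lemma codegree_deviation_eq:
  assumes sg: "simple_graph_on t H" and reg: "regular_on t H d" and t: "t > 0"
  shows "codegree_deviation t H d = (\<Sum>j<t. \<Sum>k<t. real (codegree t H j k) ^ 2) - real d ^ 4"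
proof -
  let ?c = "\<lambda>j k. real (codegree t H j k)"
  have walks: "(\<Sum>j<t. \<Sum>k<t. ?c j k) = real t * real d ^ 2"
  proof -
    have "(\<Sum>j<t. \<Sum>k<t. ?c j k) = (\<Sum>j<t. \<Sum>i<t. \<Sum>k<t. if H j i then (if H i k then (1::real) else 0) else 0)"
    proof (rule sum.cong[OF refl])
      fix j
      show "(\<Sum>k<t. ?c j k) = (\<Sum>i<t. \<Sum>k<t. if H j i then (if H i k then (1::real) else 0) else 0)"
        unfolding codegree_sum by (subst sum.swap) (intro sum.cong refl, simp)
    qed
    also have "\<dots> = (\<Sum>j<t. \<Sum>i<t. if H j i then real d else 0)"
      using regular_on_degree[OF reg] by (intro sum.cong refl) auto
    also have "\<dots> = (\<Sum>j<t. real d * (\<Sum>i<t. if H j i then 1 else 0))"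
      unfolding sum_distrib_left by (intro sum.cong refl) auto
    also have "\<dots> = (\<Sum>j<t. real d * real d)"
      using regular_on_degree[OF reg] by (intro sum.cong refl) auto
    finally show ?thesis by (simp add: power2_eq_square)
  qed
  have "codegree_deviation t H d
      = (\<Sum>j<t. \<Sum>k<t. ?c j k ^ 2 - 2 * (real d ^ 2 / real t) * ?c j k + (real d ^ 2 / real t) ^ 2)"
    unfolding codegree_deviation_def by (intro sum.cong refl) (simp add: power2_diff algebra_simps)
  also have "\<dots> = (\<Sum>j<t. \<Sum>k<t. ?c j k ^ 2) - 2 * (real d ^ 2 / real t) * (\<Sum>j<t. \<Sum>k<t. ?c j k)
      + real t * real t * (real d ^ 2 / real t) ^ 2"
    by (simp add: sum.distrib sum_subtractf sum_distrib_left)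
  finally show ?thesis
    unfolding walks using t by (simp add: field_simps power2_eq_square power4_eq_xxxx)
qed

lemma codegree_deviation_le:
  assumes sg: "simple_graph_on t H" and reg: "regular_on t H d" and t: "t > 0"
    and bound: "\<forall>\<mu>\<in>#nontrivial_eigenvalues t H. \<bar>\<mu>\<bar> \<le> \<theta>"
  shows "codegree_deviation t H d \<le> real t * \<theta> ^ 4"
proof -
  define M where "M = Max (set_mset (graph_spectrum t H))"
  have "graph_spectrum t H \<noteq> {#}" using size_graph_spectrum[OF sg] t by auto
  then have "M \<in># graph_spectrum t H" unfolding M_def by simp
  then have spec: "graph_spectrum t H = add_mset M (nontrivial_eigenvalues t H)"
    unfolding nontrivial_eigenvalues_def M_def by simp
  have "M ^ 4 \<le> real d ^ 4"
    using power_mono[OF graph_spectrum_abs_le_degree[OF reg \<open>M \<in># _\<close>] abs_ge_zero, of 4] by simp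
  moreover have "(\<Sum>\<mu>\<in>#nontrivial_eigenvalues t H. \<mu> ^ 4) \<le> (\<Sum>\<mu>\<in>#nontrivial_eigenvalues t H. \<theta> ^ 4)"
  proof (rule sum_mset_mono)
    fix \<mu> assume "\<mu> \<in># nontrivial_eigenvalues t H"
    then show "\<mu> ^ 4 \<le> \<theta> ^ 4" using power_mono[of "\<bar>\<mu>\<bar>" \<theta> 4] bound by simp
  qed
  moreover have "size (nontrivial_eigenvalues t H) \<le> t"
    using size_graph_spectrum[OF sg] spec by auto
  then have "(\<Sum>\<mu>\<in>#nontrivial_eigenvalues t H. \<theta> ^ 4) \<le> real t * \<theta> ^ 4"
    by (simp add: sum_mset_constant mult_right_mono)
  ultimately show ?thesis
    using sum_graph_spectrum_fourth_powers[OF sg] codegree_deviation_eq[OF sg reg t] spec by simp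
qed

section \<open>Sums over the vertices of \<open>K\<^sup>+\<close>\<close>

lemma finite_kplus_verts [simp]: "finite (kplus_verts t)"
proof -
  have "kplus_verts t = UNIV \<times> UNIV \<times> {..<t}" by (auto simp: kplus_verts_def)
  then show ?thesis by simp
qed

definition fibre_sum :: "(kpv \<Rightarrow> real) \<Rightarrow> nat \<Rightarrow> real" where
  "fibre_sum g u = g (True,True,u) + g (True,False,u) + g (False,True,u) + g (False,False,u)"

lemma sum_kplus_verts: "(\<Sum>a\<in>kplus_verts t. g a) = (\<Sum>u<t. fibre_sum g u)"
proof -
  have "kplus_verts t = UNIV \<times> UNIV \<times> {..<t}" by (auto simp: kplus_verts_def)
  then have "(\<Sum>a\<in>kplus_verts t. g a) = (\<Sum>s\<in>UNIV. \<Sum>x\<in>UNIV. \<Sum>u<t. g (s,x,u))"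
    by (simp add: sum.cartesian_product split_def)
  then show ?thesis by (simp add: UNIV_bool sum.distrib fibre_sum_def)
qed

lemma sum_kplus_verts_fibre_quadratic:
  "(\<Sum>a\<in>kplus_verts t. \<Sum>b\<in>kplus_verts t. if H (snd (snd a)) (snd (snd b)) then g a * g b else 0)
     = (\<Sum>u<t. \<Sum>w<t. if H u w then fibre_sum g u * fibre_sum g w else 0)"
proof -
  have "(\<Sum>b\<in>kplus_verts t. if H (snd (snd a)) (snd (snd b)) then g a * g b else 0)
      = (\<Sum>w<t. if H (snd (snd a)) w then g a * fibre_sum g w else 0)" for a
    unfolding sum_kplus_verts by (intro sum.cong refl) (auto simp: fibre_sum_def algebra_simps)
  then have "(\<Sum>a\<in>kplus_verts t. \<Sum>b\<in>kplus_verts t. if H (snd (snd a)) (snd (snd b)) then g a * g b else 0)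
      = (\<Sum>a\<in>kplus_verts t. \<Sum>w<t. if H (snd (snd a)) w then g a * fibre_sum g w else 0)"
    by simp
  also have "\<dots> = (\<Sum>w<t. \<Sum>a\<in>kplus_verts t. if H (snd (snd a)) w then g a * fibre_sum g w else 0)"
    by (rule sum.swap)
  also have "\<dots> = (\<Sum>w<t. \<Sum>u<t. if H u w then fibre_sum g u * fibre_sum g w else 0)"
    unfolding sum_kplus_verts by (intro sum.cong refl) (auto simp: fibre_sum_def algebra_simps)
  also have "\<dots> = (\<Sum>u<t. \<Sum>w<t. if H u w then fibre_sum g u * fibre_sum g w else 0)"
    by (rule sum.swap)
  finally show ?thesis .
qed

lemma sum_fibre_sum_squares_le: "(\<Sum>u<t. fibre_sum g u ^ 2) \<le> 4 * (\<Sum>a\<in>kplus_verts t. g a ^ 2)"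
proof -
  have "(a + b + c + e) ^ 2 \<le> 4 * (a ^ 2 + b ^ 2 + c ^ 2 + e ^ 2)" for a b c e :: real
    using Cauchy_Schwarz_ineq_sum[of "\<lambda>_. 1" "\<lambda>i. [a,b,c,e] ! i" "{..<4}"]
    by (simp add: numeral_eq_Suc)
  then show ?thesis
    unfolding sum_kplus_verts sum_distrib_left by (intro sum_mono) (simp add: fibre_sum_def)
qed

lemma double_sum_symmetric_eq_doubleton_sum:
  fixes P :: "'a \<Rightarrow> 'a \<Rightarrow> bool" and f :: "'a \<Rightarrow> real"
  assumes "finite V" and sym: "\<And>a b. P a b \<Longrightarrow> P b a" and irrefl: "\<And>a b. P a b \<Longrightarrow> a \<noteq> b"
  shows "(\<Sum>a\<in>V. \<Sum>b\<in>V. if P a b then f a * f b else 0) =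
         2 * (\<Sum>e\<in>{{a, b} | a b. a \<in> V \<and> b \<in> V \<and> P a b}. \<Prod>v\<in>e. f v)"
proof -
  define S where "S = {p \<in> V \<times> V. P (fst p) (snd p)}"
  define h where "h p = {fst p, snd p}" for p :: "'a \<times> 'a"
  have "(\<Sum>a\<in>V. \<Sum>b\<in>V. if P a b then f a * f b else 0) = (\<Sum>p\<in>S. f (fst p) * f (snd p))"
    unfolding S_def using \<open>finite V\<close> by (simp add: sum.cartesian_product split_def sum.inter_filter)
  also have "\<dots> = (\<Sum>e\<in>h ` S. \<Sum>p\<in>{p\<in>S. h p = e}. f (fst p) * f (snd p))"
    by (rule sum.image_gen) (use \<open>finite V\<close> in \<open>simp add: S_def\<close>)
  also have "\<dots> = (\<Sum>e\<in>h ` S. 2 * (\<Prod>v\<in>e. f v))"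
  proof (rule sum.cong[OF refl])
    fix e assume "e \<in> h ` S"
    then obtain a b where ab: "(a,b) \<in> S" "e = {a,b}" unfolding h_def by auto
    then have "P a b" "a \<noteq> b" using irrefl unfolding S_def by auto
    moreover have "{p\<in>S. h p = e} = {(a,b),(b,a)}"
      using ab sym unfolding S_def h_def by (auto simp: doubleton_eq_iff)
    ultimately show "(\<Sum>p\<in>{p\<in>S. h p = e}. f (fst p) * f (snd p)) = 2 * (\<Prod>v\<in>e. f v)"
      using ab by (simp add: mult.commute)
  qed
  also have "h ` S = {{a, b} | a b. a \<in> V \<and> b \<in> V \<and> P a b}"
    unfolding h_def S_def by (auto simp: image_iff) blast+
  finally show ?thesis by (simp add: sum_distrib_left)
qed

section \<open>Configurations on \<open>K\<^sub>H\<^sub>,\<^sub>H\<close> for a mixing graph \<open>H\<close>\<close>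

text \<open>\<open>ext_weight\<close>, \<open>common_ext_weight\<close> and \<open>nbr_profile z\<close> are the quantities \<open>R\<close>,
  \<open>C\<close> and \<open>g\<^sub>z\<close> of the proof idea.  The totals range over ordered pairs of vertices of
  \<open>K\<^sup>+\<close>, so they count every edge twice.\<close>

locale mixing_configuration =
  fixes t :: nat and H :: "nat \<Rightarrow> nat \<Rightarrow> bool" and d :: nat
    and F :: "kpv set set" and \<phi> :: "kpv \<Rightarrow> real" and \<sigma> :: real
  assumes configuration: "configuration t H F \<phi>"
    and simple: "simple_graph_on t H" and regular: "regular_on t H d"
    and \<sigma>_nonneg: "0 \<le> \<sigma>"
    and mixing: "\<And>G. real d / real t * (\<Sum>u<t. G u) ^ 2 - \<sigma> * (\<Sum>u<t. G u ^ 2)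
                    \<le> (\<Sum>u<t. \<Sum>w<t. if H u w then G u * G w else 0)"
begin

abbreviation V :: "kpv set" where "V \<equiv> kplus_verts t"

abbreviation vertex :: "kpv \<Rightarrow> nat" where "vertex a \<equiv> snd (snd a)"

definition ext_adj :: "kpv \<Rightarrow> kpv \<Rightarrow> bool" where
  "ext_adj a b \<longleftrightarrow> {a,b} \<in> F \<and> fst a \<noteq> fst b"

definition ext_weight :: "kpv \<Rightarrow> real" where
  "ext_weight a = (\<Sum>z\<in>V. if ext_adj a z then \<phi> z else 0)"

definition common_ext_weight :: "kpv \<Rightarrow> kpv \<Rightarrow> real" where
  "common_ext_weight a b = (\<Sum>z\<in>V. if ext_adj a z \<and> ext_adj b z then \<phi> z else 0)"

definition overlap :: "kpv \<Rightarrow> kpv \<Rightarrow> real" where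
  "overlap a b = common_ext_weight a b / (sqrt (ext_weight a) * sqrt (ext_weight b))"

definition nbr_profile :: "kpv \<Rightarrow> kpv \<Rightarrow> real" where
  "nbr_profile z a = (if ext_adj a z then \<phi> a / sqrt (ext_weight a) else 0)"

definition ext_total :: real where
  "ext_total = (\<Sum>a\<in>V. \<Sum>b\<in>V. if ext_adj a b then \<phi> a * \<phi> b else 0)"

definition int_total :: real where
  "int_total = (\<Sum>a\<in>V. \<Sum>b\<in>V.
     if fst a = fst b \<and> vertex a \<noteq> vertex b \<and> {a,b} \<in> F then \<phi> a * \<phi> b else 0)"

definition common_total :: real where
  "common_total = (\<Sum>a\<in>V. \<Sum>b\<in>V. if H (vertex a) (vertex b) then \<phi> a * \<phi> b * overlap a b else 0)"

definition profile_energy :: real where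
  "profile_energy = (\<Sum>z\<in>V. \<phi> z * (\<Sum>a\<in>V. nbr_profile z a) ^ 2)"

lemma mem_V: "a \<in> V \<longleftrightarrow> vertex a < t"
  by (cases a) (auto simp: kplus_verts_def)

lemma \<phi>_bounds:
  assumes "a \<in> V" shows "0 \<le> \<phi> a" "\<phi> a \<le> 1"
proof -
  obtain s x v where a: "a = (s,x,v)" by (cases a) auto
  have "1/2 \<le> \<phi> (s, True, v) \<and> \<phi> (s, True, v) \<le> 1 \<and> \<phi> (s, False, v) = 1 - \<phi> (s, True, v)"
    using configuration assms a mem_V unfolding configuration_def by auto
  then show "0 \<le> \<phi> a" "\<phi> a \<le> 1" using a by (cases x; auto)+
qed

lemma \<phi>_pair: "v < t \<Longrightarrow> \<phi> (s,True,v) + \<phi> (s,False,v) = 1"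
  using configuration unfolding configuration_def by auto

lemma sum_\<phi>: "(\<Sum>a\<in>V. \<phi> a) = 2 * real t"
proof -
  have "fibre_sum \<phi> u = 2" if "u < t" for u
    using \<phi>_pair[OF that, of True] \<phi>_pair[OF that, of False] by (simp add: fibre_sum_def)
  then show ?thesis unfolding sum_kplus_verts by simp
qed

lemma ext_adj_sym: "ext_adj a b = ext_adj b a"
  unfolding ext_adj_def by (auto simp: insert_commute)

lemma F_edge_verts:
  assumes "{a,b} \<in> F" shows "a \<in> V" "b \<in> V"
proof -
  have "{a,b} \<in> kplus_edges t H" using assms configuration unfolding configuration_def by auto
  then obtain a' b' where "{a,b} = {a',b'}" "a' \<in> V" "b' \<in> V"
    unfolding kplus_edges_def by auto
  then show "a \<in> V" "b \<in> V" by (auto simp: doubleton_eq_iff)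
qed

lemma ext_adj_verts: "ext_adj a b \<Longrightarrow> a \<in> V \<and> b \<in> V"
  using F_edge_verts unfolding ext_adj_def by blast

lemma F_internal_edge_adj:
  assumes "{a,b} \<in> F" "fst a = fst b" "vertex a \<noteq> vertex b"
  shows "H (vertex a) (vertex b)"
proof -
  have "{a,b} \<in> kplus_edges t H" using assms configuration unfolding configuration_def by auto
  then obtain a' b' where e: "{a,b} = {a',b'}" "kplus_adj H a' b'"
    unfolding kplus_edges_def by auto
  have "H (vertex a) (vertex b) \<or> H (vertex b) (vertex a)"
    using e assms(2,3) by (cases a; cases b) (auto simp: doubleton_eq_iff kplus_adj_def K_adj_def)
  then show ?thesis
    using simple_graph_on_sym[OF simple] F_edge_verts[OF assms(1)] mem_V by blast
qed

text \<open>This is the only place where edge-triangle-freeness of \<open>F\<close> enters.\<close>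

lemma F_edge_no_common_ext_nbr:
  assumes "{a,b} \<in> F" "ext_adj a z" "ext_adj b z" shows False
proof -
  have "{a,z} \<in> F" "{z,b} \<in> F"
    using assms unfolding ext_adj_def by (auto simp: insert_commute)
  moreover have "external_edge {a,z}"
    using assms(2) unfolding ext_adj_def external_edge_def by blast
  ultimately show False
    using configuration assms(1) unfolding configuration_def ETF_def by blast
qed

lemma ext_weight_nonneg: "0 \<le> ext_weight a"
  unfolding ext_weight_def by (intro sum_nonneg) (auto simp: \<phi>_bounds)

lemma ext_weight_ge:
  assumes "ext_adj a z" shows "\<phi> z \<le> ext_weight a"
proof -
  have "(if ext_adj a z then \<phi> z else 0) \<le> ext_weight a"
    unfolding ext_weight_def using ext_adj_verts[OF assms]
    by (intro member_le_sum) (auto simp: \<phi>_bounds)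
  then show ?thesis using assms by simp
qed

lemma ext_weight_le: "ext_weight a \<le> real t"
proof -
  have "ext_weight a \<le> (\<Sum>z\<in>V. if fst z \<noteq> fst a then \<phi> z else 0)"
    unfolding ext_weight_def by (intro sum_mono) (auto simp: ext_adj_def \<phi>_bounds F_edge_verts)
  also have "\<dots> = (\<Sum>u<t. 1)"
    unfolding sum_kplus_verts
    by (intro sum.cong refl) (use \<phi>_pair in \<open>cases "fst a"; auto simp: fibre_sum_def\<close>)
  finally show ?thesis by simp
qed

lemma overlap_le_1: "overlap a b \<le> 1"
proof -
  have "0 \<le> common_ext_weight a b" "common_ext_weight a b \<le> ext_weight a"
    "common_ext_weight a b \<le> ext_weight b"
    unfolding common_ext_weight_def ext_weight_def by (auto intro!: sum_nonneg sum_mono simp: \<phi>_bounds)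
  then have "sqrt (common_ext_weight a b ^ 2) \<le> sqrt (ext_weight a * ext_weight b)"
    by (intro real_sqrt_le_mono) (simp add: power2_eq_square mult_mono)
  then have "common_ext_weight a b \<le> sqrt (ext_weight a) * sqrt (ext_weight b)"
    using \<open>0 \<le> common_ext_weight a b\<close> by (simp add: real_sqrt_mult)
  moreover have "0 \<le> sqrt (ext_weight a) * sqrt (ext_weight b)" using ext_weight_nonneg by simp
  ultimately show ?thesis
    unfolding overlap_def by (auto simp: divide_le_eq_1 less_le)
qed

lemma int_term_le:
  assumes "a \<in> V" "b \<in> V"
  shows "(if fst a = fst b \<and> vertex a \<noteq> vertex b \<and> {a,b} \<in> F then \<phi> a * \<phi> b else 0)
     \<le> (if fst a = fst b \<and> H (vertex a) (vertex b) then \<phi> a * \<phi> b else 0)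
       - (if H (vertex a) (vertex b) then \<phi> a * \<phi> b * overlap a b else 0)"
proof -
  have \<phi>\<phi>: "0 \<le> \<phi> a * \<phi> b" using \<phi>_bounds assms by simp
  have other_side: "common_ext_weight a b = 0" if "fst a \<noteq> fst b"
    unfolding common_ext_weight_def ext_adj_def using that by (intro sum.neutral) auto
  have F_edge: "common_ext_weight a b = 0" if "{a,b} \<in> F"
    unfolding common_ext_weight_def using F_edge_no_common_ext_nbr[OF that] by (intro sum.neutral) auto
  have "vertex a \<noteq> vertex b" if "H (vertex a) (vertex b)"
    using that simple assms mem_V unfolding simple_graph_on_def by auto
  then show ?thesis
    using other_side F_edge F_internal_edge_adj mult_left_mono[OF overlap_le_1 \<phi>\<phi>]
    by (auto simp: overlap_def)
qed

lemma same_side_adjacent_total: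
  "(\<Sum>a\<in>V. \<Sum>b\<in>V. if fst a = fst b \<and> H (vertex a) (vertex b) then \<phi> a * \<phi> b else 0)
     = 2 * real t * real d"
proof -
  have "(\<Sum>b\<in>V. if fst a = fst b \<and> H (vertex a) (vertex b) then \<phi> a * \<phi> b else 0) = \<phi> a * real d"
    if "a \<in> V" for a
  proof -
    have "(\<Sum>b\<in>V. if fst a = fst b \<and> H (vertex a) (vertex b) then \<phi> a * \<phi> b else 0)
        = \<phi> a * (\<Sum>w<t. if H (vertex a) w then 1 else 0)"
    proof (unfold sum_kplus_verts sum_distrib_left, rule sum.cong[OF refl])
      fix w assume "w \<in> {..<t}"
      then have "\<phi> a * \<phi> (s,True,w) + \<phi> a * \<phi> (s,False,w) = \<phi> a" for s
        using \<phi>_pair[of w s] by (simp flip: distrib_left)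
      then show "fibre_sum (\<lambda>b. if fst a = fst b \<and> H (vertex a) (vertex b) then \<phi> a * \<phi> b else 0) w
          = \<phi> a * (if H (vertex a) w then 1 else 0)"
        by (cases "fst a") (auto simp: fibre_sum_def)
    qed
    then show ?thesis using regular_on_degree[OF regular] that mem_V by simp
  qed
  then show ?thesis by (simp add: sum_distrib_right[symmetric] sum_\<phi>)
qed

lemma int_total_le: "int_total \<le> 2 * real t * real d - common_total"
proof -
  have "int_total \<le> (\<Sum>a\<in>V. \<Sum>b\<in>V. (if fst a = fst b \<and> H (vertex a) (vertex b) then \<phi> a * \<phi> b else 0)
       - (if H (vertex a) (vertex b) then \<phi> a * \<phi> b * overlap a b else 0))"
    unfolding int_total_def by (intro sum_mono int_term_le)
  then show ?thesis
    unfolding common_total_def same_side_adjacent_total[symmetric] by (simp add: sum_subtractf)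
qed

lemma common_total_eq:
  "common_total = (\<Sum>z\<in>V. \<phi> z * (\<Sum>a\<in>V. \<Sum>b\<in>V.
      if H (vertex a) (vertex b) then nbr_profile z a * nbr_profile z b else 0))"
proof -
  have pointwise: "\<phi> a * \<phi> b * overlap a b = (\<Sum>z\<in>V. \<phi> z * (nbr_profile z a * nbr_profile z b))" for a b
  proof -
    have "(\<Sum>z\<in>V. \<phi> z * (nbr_profile z a * nbr_profile z b))
        = (\<Sum>z\<in>V. \<phi> a / sqrt (ext_weight a) * (\<phi> b / sqrt (ext_weight b))
            * (if ext_adj a z \<and> ext_adj b z then \<phi> z else 0))"
      unfolding nbr_profile_def by (intro sum.cong refl) auto
    also have "\<dots> = \<phi> a / sqrt (ext_weight a) * (\<phi> b / sqrt (ext_weight b)) * common_ext_weight a b"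
      unfolding common_ext_weight_def by (simp add: sum_distrib_left)
    finally show ?thesis by (simp add: overlap_def)
  qed
  have "common_total = (\<Sum>a\<in>V. \<Sum>b\<in>V. \<Sum>z\<in>V.
      \<phi> z * (if H (vertex a) (vertex b) then nbr_profile z a * nbr_profile z b else 0))"
    unfolding common_total_def
  proof (intro sum.cong refl)
    fix a b
    show "(if H (vertex a) (vertex b) then \<phi> a * \<phi> b * overlap a b else 0)
        = (\<Sum>z\<in>V. \<phi> z * (if H (vertex a) (vertex b) then nbr_profile z a * nbr_profile z b else 0))"
      using pointwise[of a b] by simp
  qed
  also have "\<dots> = (\<Sum>a\<in>V. \<Sum>z\<in>V. \<Sum>b\<in>V.
      \<phi> z * (if H (vertex a) (vertex b) then nbr_profile z a * nbr_profile z b else 0))"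
    by (intro sum.cong refl sum.swap)
  also have "\<dots> = (\<Sum>z\<in>V. \<Sum>a\<in>V. \<Sum>b\<in>V.
      \<phi> z * (if H (vertex a) (vertex b) then nbr_profile z a * nbr_profile z b else 0))"
    by (rule sum.swap)
  finally show ?thesis
    unfolding sum_distrib_left .
qed

lemma nbr_profile_quadratic_ge:
  "real d / real t * (\<Sum>a\<in>V. nbr_profile z a) ^ 2 - 4 * \<sigma> * (\<Sum>a\<in>V. nbr_profile z a ^ 2)
     \<le> (\<Sum>a\<in>V. \<Sum>b\<in>V. if H (vertex a) (vertex b) then nbr_profile z a * nbr_profile z b else 0)"
  using mixing[of "fibre_sum (nbr_profile z)"]
    mult_left_mono[OF sum_fibre_sum_squares_le[where g = "nbr_profile z" and t = t] \<sigma>_nonneg]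
  unfolding sum_kplus_verts_fibre_quadratic sum_kplus_verts[where g = "nbr_profile z"] by simp

lemma nbr_profile_squares_total_le: "(\<Sum>z\<in>V. \<phi> z * (\<Sum>a\<in>V. nbr_profile z a ^ 2)) \<le> 2 * real t"
proof -
  have profile_sq: "nbr_profile z a ^ 2 = (if ext_adj a z then \<phi> a ^ 2 / ext_weight a else 0)" for z a
    unfolding nbr_profile_def using ext_weight_nonneg by (simp add: power_divide)
  have "(\<Sum>z\<in>V. \<phi> z * (\<Sum>a\<in>V. nbr_profile z a ^ 2))
      = (\<Sum>z\<in>V. \<Sum>a\<in>V. if ext_adj a z then \<phi> z * (\<phi> a ^ 2 / ext_weight a) else 0)"
    unfolding profile_sq sum_distrib_left by (intro sum.cong refl) auto
  also have "\<dots> = (\<Sum>a\<in>V. \<Sum>z\<in>V. if ext_adj a z then \<phi> z * (\<phi> a ^ 2 / ext_weight a) else 0)"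
    by (rule sum.swap)
  also have "\<dots> = (\<Sum>a\<in>V. \<phi> a ^ 2 / ext_weight a * ext_weight a)"
    unfolding ext_weight_def sum_distrib_left by (intro sum.cong refl) auto
  also have "\<dots> \<le> (\<Sum>a\<in>V. \<phi> a)"
  proof (rule sum_mono)
    fix a assume "a \<in> V"
    then have "\<phi> a ^ 2 \<le> \<phi> a" "0 \<le> \<phi> a" using \<phi>_bounds by (simp_all add: power2_eq_square mult_left_le)
    then show "\<phi> a ^ 2 / ext_weight a * ext_weight a \<le> \<phi> a"
      by (cases "ext_weight a = 0") auto
  qed
  finally show ?thesis by (simp add: sum_\<phi>)
qed

lemma common_total_ge: "real d / real t * profile_energy - 8 * \<sigma> * real t \<le> common_total"
proof -
  have "(\<Sum>z\<in>V. \<phi> z * (real d / real t * (\<Sum>a\<in>V. nbr_profile z a) ^ 2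
          - 4 * \<sigma> * (\<Sum>a\<in>V. nbr_profile z a ^ 2))) \<le> common_total"
    unfolding common_total_eq by (intro sum_mono mult_left_mono nbr_profile_quadratic_ge \<phi>_bounds)
  moreover have "4 * \<sigma> * (\<Sum>z\<in>V. \<phi> z * (\<Sum>a\<in>V. nbr_profile z a ^ 2)) \<le> 4 * \<sigma> * (2 * real t)"
    using nbr_profile_squares_total_le \<sigma>_nonneg by (intro mult_left_mono) auto
  ultimately show ?thesis
    unfolding profile_energy_def by (simp add: algebra_simps sum_subtractf sum_distrib_left)
qed

lemma ext_total_eq: "ext_total = (\<Sum>z\<in>V. \<phi> z * ext_weight z)"
  unfolding ext_total_def ext_weight_def sum_distrib_left by (intro sum.cong refl) auto

lemma ext_total_nonneg: "0 \<le> ext_total"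
  unfolding ext_total_eq by (intro sum_nonneg) (simp add: \<phi>_bounds ext_weight_nonneg)

lemma ext_total_le: "ext_total \<le> 2 * real t ^ 2"
proof -
  have "ext_total \<le> (\<Sum>z\<in>V. \<phi> z * real t)"
    unfolding ext_total_eq by (intro sum_mono mult_left_mono ext_weight_le \<phi>_bounds)
  then show ?thesis by (simp add: sum_distrib_right[symmetric] sum_\<phi> power2_eq_square)
qed

lemma two_le_ratio_add_inverse:
  fixes r s :: real
  assumes "0 < r" "0 < s"
  shows "2 \<le> r / s + s / r"
proof -
  have "r / s + s / r - 2 = (r - s) ^ 2 / (r * s)"
    using assms by (simp add: field_simps power2_eq_square)
  also have "\<dots> \<ge> 0" using assms by simp
  finally show ?thesis by simp
qed

text \<open>With \<open>S\<^sub>z = \<Sum>\<^sub>a g\<^sub>z(a)\<close>, the sum \<open>U = \<Sum>\<^sub>z \<phi>(z) S\<^sub>z \<surd>R(z)\<close> satisfies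
  \<open>U\<^sup>2 \<le> profile_energy \<cdot> ext_total\<close> by Cauchy-Schwarz, and \<open>ext_total \<le> U\<close> after
  symmetrising over each external edge and using \<open>r/s + s/r \<ge> 2\<close>.\<close>

lemma ext_total_le_profile_energy: "ext_total \<le> profile_energy"
proof -
  define K where "K a z = (if ext_adj a z
    then \<phi> a * \<phi> z * (sqrt (ext_weight z) / sqrt (ext_weight a)) else 0)" for a z
  define U where "U = (\<Sum>z\<in>V. \<Sum>a\<in>V. K a z)"
  have U_eq: "U = (\<Sum>z\<in>V. (sqrt (\<phi> z) * (\<Sum>a\<in>V. nbr_profile z a)) * (sqrt (\<phi> z) * sqrt (ext_weight z)))"
  proof -
    have "sqrt (\<phi> z) * sqrt (\<phi> z) = \<phi> z" if "z \<in> V" for z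
      using \<phi>_bounds[OF that] by simp
    then show ?thesis
      unfolding U_def K_def nbr_profile_def sum_distrib_left sum_distrib_right
      by (intro sum.cong refl) (auto simp: algebra_simps)
  qed
  have U_sq: "U ^ 2 \<le> profile_energy * ext_total"
    using Cauchy_Schwarz_ineq_sum[of "\<lambda>z. sqrt (\<phi> z) * (\<Sum>a\<in>V. nbr_profile z a)"
        "\<lambda>z. sqrt (\<phi> z) * sqrt (ext_weight z)" V]
    unfolding U_eq[symmetric] profile_energy_def ext_total_eq
    by (simp add: power_mult_distrib \<phi>_bounds ext_weight_nonneg cong: sum.cong)
  have K_pair: "2 * (if ext_adj a z then \<phi> a * \<phi> z else 0) \<le> K a z + K z a" for a z
  proof (cases "ext_adj a z \<and> \<phi> a \<noteq> 0 \<and> \<phi> z \<noteq> 0")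
    case True
    then have az: "ext_adj a z" and za: "ext_adj z a" using ext_adj_sym by blast+
    have pos: "\<phi> a > 0" "\<phi> z > 0"
      using True \<phi>_bounds(1) ext_adj_verts[of a z] by (auto simp: less_le)
    then have "ext_weight a > 0" "ext_weight z > 0"
      using ext_weight_ge[OF az] ext_weight_ge[OF za] by linarith+
    then have "2 \<le> sqrt (ext_weight z) / sqrt (ext_weight a) + sqrt (ext_weight a) / sqrt (ext_weight z)"
      by (intro two_le_ratio_add_inverse) auto
    then have "\<phi> a * \<phi> z * 2 \<le> \<phi> a * \<phi> z * (sqrt (ext_weight z) / sqrt (ext_weight a)
        + sqrt (ext_weight a) / sqrt (ext_weight z))"
      using pos by (intro mult_left_mono) auto
    then show ?thesis
      using az za unfolding K_def by (simp add: algebra_simps)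
  qed (auto simp: K_def ext_adj_sym)
  have "2 * U = (\<Sum>a\<in>V. \<Sum>z\<in>V. K a z + K z a)"
    unfolding U_def sum.distrib by (subst (2) sum.swap) simp
  also have "\<dots> \<ge> (\<Sum>a\<in>V. \<Sum>z\<in>V. 2 * (if ext_adj a z then \<phi> a * \<phi> z else 0))"
    by (intro sum_mono K_pair)
  finally have "ext_total \<le> U" unfolding ext_total_def by (simp flip: sum_distrib_left)
  then have "ext_total * ext_total \<le> profile_energy * ext_total"
    using U_sq ext_total_nonneg power_mono[of ext_total U 2] by (simp add: power2_eq_square)
  moreover have "0 \<le> profile_energy"
    unfolding profile_energy_def by (intro sum_nonneg) (simp add: \<phi>_bounds)
  ultimately show ?thesis
    using ext_total_nonneg by (cases "ext_total = 0") auto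
qed

lemma int_edge_sum_eq: "(\<Sum>e\<in>{e\<in>F. internal_edge e}. \<Prod>v\<in>e. \<phi> v) = int_total / 2"
proof -
  define P where "P a b \<longleftrightarrow> fst a = fst b \<and> vertex a \<noteq> vertex b \<and> {a,b} \<in> F" for a b
  have "{e\<in>F. internal_edge e} = {{a, b} | a b. a \<in> V \<and> b \<in> V \<and> P a b}"
    unfolding P_def internal_edge_def using F_edge_verts by blast
  moreover have "int_total = 2 * (\<Sum>e\<in>{{a, b} | a b. a \<in> V \<and> b \<in> V \<and> P a b}. \<Prod>v\<in>e. \<phi> v)"
    unfolding int_total_def P_def[symmetric]
    by (rule double_sum_symmetric_eq_doubleton_sum) (auto simp: P_def insert_commute)
  ultimately show ?thesis by simp
qed

lemma ext_edge_sum_eq: "(\<Sum>e\<in>{e\<in>F. external_edge e}. \<Prod>v\<in>e. \<phi> v) = ext_total / 2"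
proof -
  have "{e\<in>F. external_edge e} = {{a, b} | a b. a \<in> V \<and> b \<in> V \<and> ext_adj a b}"
    unfolding ext_adj_def external_edge_def using F_edge_verts by blast
  moreover have "ext_total = 2 * (\<Sum>e\<in>{{a, b} | a b. a \<in> V \<and> b \<in> V \<and> ext_adj a b}. \<Prod>v\<in>e. \<phi> v)"
    unfolding ext_total_def
    by (rule double_sum_symmetric_eq_doubleton_sum) (auto simp: ext_adj_def insert_commute)
  ultimately show ?thesis by simp
qed

theorem zeta_sum_le:
  assumes "t > 0"
  shows "zeta_i t d F \<phi> + zeta_e t F \<phi> \<le> 1 + 4 * \<sigma> / real d"
proof -
  have zeta_i: "zeta_i t d F \<phi> = int_total / (2 * real t * real d)"
    unfolding zeta_i_def int_edge_sum_eq by simp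
  have zeta_e: "zeta_e t F \<phi> = ext_total / (2 * real t ^ 2)"
    unfolding zeta_e_def ext_edge_sum_eq by simp
  show ?thesis
  proof (cases "d = 0")
    case True
    then show ?thesis using zeta_i zeta_e ext_total_le assms by simp
  next
    case False
    have "int_total \<le> 2 * real t * real d - real d / real t * ext_total + 8 * \<sigma> * real t"
      using int_total_le common_total_ge ext_total_le_profile_energy
        mult_left_mono[of ext_total profile_energy "real d / real t"] by simp
    then have "int_total / (2 * real t * real d)
        \<le> (2 * real t * real d - real d / real t * ext_total + 8 * \<sigma> * real t) / (2 * real t * real d)"
      using assms by (intro divide_right_mono) auto
    also have "\<dots> = 1 - ext_total / (2 * real t ^ 2) + 4 * \<sigma> / real d"
      using assms False by (simp add: field_simps power2_eq_square)
    finally show ?thesis using zeta_i zeta_e by simp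
  qed
qed

end

section \<open>The asymptotic bound\<close>

lemma ratio_le_of_fourth_power_bound:
  fixes x \<sigma> D c C :: real
  assumes x: "0 < x" and c: "0 < c" and C: "0 < C" and \<sigma>: "0 \<le> \<sigma>"
    and \<sigma>_le: "\<sigma> ^ 4 \<le> x * (C * x powr (1/3)) ^ 4"
    and D_ge: "c * x powr (2/3) \<le> D"
  shows "\<sigma> / D \<le> C / c / x powr (1/12)"
proof -
  define y where "y = x powr (1/12)"
  have y: "0 < y" using x by (simp add: y_def)
  have y_pow: "x powr (real k / 12) = y ^ k" for k :: nat
    using x by (simp add: y_def powr_power)
  have x_eq: "x = y ^ 12" using y_pow[of 12] x by simp
  have "x powr (1/3) = y ^ 4" using y_pow[of 4] by simp
  then have "x * (C * x powr (1/3)) ^ 4 = y ^ 12 * (C * y ^ 4) ^ 4"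
    by (simp only: x_eq)
  also have "\<dots> = (C * y ^ 7) ^ 4" by (simp add: eval_nat_numeral)
  finally have "\<sigma> \<le> C * y ^ 7"
    using \<sigma>_le \<sigma> C y power_mono_iff[of \<sigma> "C * y ^ 7" 4] by simp
  moreover have "x powr (2/3) = y ^ 8" using y_pow[of 8] by simp
  then have "c * y ^ 8 \<le> D" using D_ge by (simp only:)
  moreover have "0 < c * y ^ 8" using c y by simp
  ultimately have "\<sigma> / D \<le> C * y ^ 7 / (c * y ^ 8)"
    by (intro frac_le) (use C y in simp_all)
  also have "\<dots> = C / c / y"
    using c y by (simp add: eval_nat_numeral)
  finally show ?thesis unfolding y_def .
qed

lemma tendsto_const_div_powr_add_inverse:
  "((\<lambda>t::nat. K / real t powr (1/12) + 1 / real t) \<longlongrightarrow> 0) sequentially"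
  by real_asymp

lemma eventually_abs_less_of_bound_tendsto_0:
  fixes b \<epsilon> :: "nat \<Rightarrow> real"
  assumes lim: "b \<longlonglongrightarrow> 0" and \<delta>: "0 < \<delta>"
    and le: "\<And>t. t \<in> T \<Longrightarrow> t0 \<le> t \<Longrightarrow> \<bar>\<epsilon> t\<bar> \<le> b t"
  shows "\<exists>N. \<forall>t\<in>T. N \<le> t \<longrightarrow> \<bar>\<epsilon> t\<bar> < \<delta>"
proof -
  have "\<forall>\<^sub>F t in sequentially. b t < \<delta>" using lim \<delta> by (rule order_tendstoD(2))
  then obtain N where N: "\<And>t. N \<le> t \<Longrightarrow> b t < \<delta>" by (auto simp: eventually_sequentially)
  have "\<bar>\<epsilon> t\<bar> < \<delta>" if "t \<in> T" "max N t0 \<le> t" for t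
    using le[OF that(1)] N[of t] that(2) by simp
  then show ?thesis by blast
qed

lemma configuration_zeta_sum_le:
  assumes sg: "simple_graph_on t H" and reg: "regular_on t H d" and t: "0 < t"
    and conf: "configuration t H F \<phi>"
  shows "zeta_i t d F \<phi> + zeta_e t F \<phi> \<le> 1 + 4 * sqrt (sqrt (codegree_deviation t H d)) / real d"
proof -
  interpret mixing_configuration t H d F \<phi> "sqrt (sqrt (codegree_deviation t H d))"
    by unfold_locales
      (fact conf sg reg regular_graph_mixing[OF sg reg] | simp add: codegree_deviation_nonneg)+
  show ?thesis by (rule zeta_sum_le[OF t])
qed

lemma mixing_error_le:
  assumes sg: "simple_graph_on t H" and reg: "regular_on t H d" and t: "0 < t"
    and c: "0 < c" and C: "0 < C"
    and eig: "\<forall>\<mu>\<in>#nontrivial_eigenvalues t H. \<bar>\<mu>\<bar> \<le> C * real t powr (1/3)"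
    and deg: "c * real t powr (2/3) \<le> real d"
  shows "sqrt (sqrt (codegree_deviation t H d)) / real d \<le> C / c / real t powr (1/12)"
proof (rule ratio_le_of_fourth_power_bound)
  have "sqrt (sqrt (codegree_deviation t H d)) ^ 4 = (sqrt (sqrt (codegree_deviation t H d)) ^ 2) ^ 2"
    by (simp flip: power_mult)
  also have "\<dots> = codegree_deviation t H d" using codegree_deviation_nonneg by simp
  also have "\<dots> \<le> real t * (C * real t powr (1/3)) ^ 4"
    by (rule codegree_deviation_le[OF sg reg t eig])
  finally show "sqrt (sqrt (codegree_deviation t H d)) ^ 4 \<le> real t * (C * real t powr (1/3)) ^ 4" .
qed (use t c C deg codegree_deviation_nonneg in simp_all)

theorem proposition4p4:
  fixes c :: real
    and T :: "nat set"
    and H :: "nat \<Rightarrow> nat \<Rightarrow> nat \<Rightarrow> bool"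
    and d :: "nat \<Rightarrow> nat"
  assumes "0 < c" "c \<le> 1"
    and "infinite T" "\<forall>t\<in>T. 0 < t"
    and graphs: "\<forall>t\<in>T. simple_graph_on t (H t) \<and> triangle_free_on t (H t) \<and> regular_on t (H t) (d t)"
    and deg: "\<exists>c1 c2 t0. 0 < c1 \<and> 0 < c2 \<and> (\<forall>t\<in>T. t \<ge> t0 \<longrightarrow>
                c1 * real t powr (2/3) \<le> real (d t) \<and> real (d t) \<le> c2 * real t powr (2/3))"
    and eig: "\<exists>C t0. 0 < C \<and> (\<forall>t\<in>T. t \<ge> t0 \<longrightarrow>
                (\<forall>\<mu>\<in>#nontrivial_eigenvalues t (H t). \<bar>\<mu>\<bar> \<le> C * real t powr (1/3)))"
  shows "\<exists>\<epsilon> :: nat \<Rightarrow> real.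
           (\<forall>\<delta>>0. \<exists>t0. \<forall>t\<in>T. t \<ge> t0 \<longrightarrow> \<bar>\<epsilon> t\<bar> < \<delta>) \<and>
           (\<forall>t\<in>T. \<forall>F \<phi>. configuration t (H t) F \<phi> \<longrightarrow>
                zeta_i t (d t) F \<phi> + zeta_e t F \<phi> < 1 + \<epsilon> t)"
proof -
  obtain c1 t0 where c1: "0 < c1"
    and d_ge: "\<And>t. t \<in> T \<Longrightarrow> t0 \<le> t \<Longrightarrow> c1 * real t powr (2/3) \<le> real (d t)"
    using deg by blast
  obtain C t1 where C: "0 < C" and eig_le: "\<And>t. t \<in> T \<Longrightarrow> t1 \<le> t \<Longrightarrow>
      \<forall>\<mu>\<in>#nontrivial_eigenvalues t (H t). \<bar>\<mu>\<bar> \<le> C * real t powr (1/3)"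
    using eig by blast
  define e where "e t = sqrt (sqrt (codegree_deviation t (H t) (d t))) / real (d t)" for t
  have e_nonneg: "0 \<le> e t" for t
    unfolding e_def using codegree_deviation_nonneg by simp
  have e_le: "\<bar>4 * e t + 1 / real t\<bar> \<le> 4 * C / c1 / real t powr (1/12) + 1 / real t"
    if "t \<in> T" "max t0 t1 \<le> t" for t
  proof -
    have "e t \<le> C / c1 / real t powr (1/12)"
      unfolding e_def using graphs that assms(4) d_ge eig_le c1 C by (intro mixing_error_le) auto
    moreover have "4 * C / c1 / real t powr (1/12) = 4 * (C / c1 / real t powr (1/12))" by simp
    moreover have "0 \<le> 4 * e t + 1 / real t" using e_nonneg[of t] by simp
    ultimately show ?thesis by linarith
  qed
  have small: "\<exists>N. \<forall>t\<in>T. N \<le> t \<longrightarrow> \<bar>4 * e t + 1 / real t\<bar> < \<delta>" if "0 < \<delta>" for \<delta>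
    by (rule eventually_abs_less_of_bound_tendsto_0
        [OF tendsto_const_div_powr_add_inverse[of "4 * C / c1"] that e_le])
  have bound: "zeta_i t (d t) F \<phi> + zeta_e t F \<phi> < 1 + (4 * e t + 1 / real t)"
    if "t \<in> T" "configuration t (H t) F \<phi>" for t F \<phi>
  proof -
    have t: "0 < t" using assms(4) that(1) by blast
    have "zeta_i t (d t) F \<phi> + zeta_e t F \<phi>
        \<le> 1 + 4 * sqrt (sqrt (codegree_deviation t (H t) (d t))) / real (d t)"
      using graphs that t by (intro configuration_zeta_sum_le) auto
    moreover have "4 * sqrt (sqrt (codegree_deviation t (H t) (d t))) / real (d t) = 4 * e t"
      unfolding e_def by simp
    moreover have "0 < 1 / real t" using t by simp
    ultimately show ?thesis by linarith
  qed
  show ?thesis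
  proof (intro exI[of _ "\<lambda>t. 4 * e t + 1 / real t"] conjI allI impI ballI)
    fix \<delta> :: real assume "0 < \<delta>"
    then show "\<exists>t0. \<forall>t\<in>T. t \<ge> t0 \<longrightarrow> \<bar>4 * e t + 1 / real t\<bar> < \<delta>" by (rule small)
  next
    fix t F \<phi> assume "t \<in> T" "configuration t (H t) F \<phi>"
    then show "zeta_i t (d t) F \<phi> + zeta_e t F \<phi> < 1 + (4 * e t + 1 / real t)" by (rule bound)
  qed
qed

end
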